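(* Let $A\in\Theta_\triangle(n,r)$, write $A=\jmath_\triangle(\lambda,y_A,\mu)$ with $\lambda,\mu\in\Lambda_\triangle(n,r)$ and $y_A\in\mathcal D_{\lambda,\mu}$, and let $y_A^+$ be the unique longest element of the double coset $\mathfrak S_\lambda y_A\mathfrak S_\mu$ and $w_{0,\mu}$ the longest element of $\mathfrak S_\mu$. Then $\ell(y_A^+)=d_A+\ell(w_{0,\mu})$, where $\mu=\mathrm{co}(A)$ and $d_A=\sum_{1\le i\le n,\,i\ge k,\,j<l}a_{i,j}a_{k,l}$.
   Context: $n\ge2$. $\Theta_\triangle(n)$: matrices $A=(a_{i,j})_{i,j\in\mathbb Z}$ with $a_{i,j}\in\mathbb N$, $a_{i+n,j+n}=a_{i,j}$, finitely many nonzero entries per row and column; $\sigma(A)=\sum_{1\le i\le n,j\in\mathbb Z}a_{i,j}$; $\Theta_\triangle(n,r)=\{A:\sigma(A)=r\}$; $\mathrm{co}(A)=(\sum_ia_{i,j})_{j}$. $\Lambda_\triangle(n,r)$ is the set of $n$-periodic sequences $(\lambda_i)_{i\in\mathbb Z}$ of nonnegative integers with $\sum_{i=1}^n\lambda_i=r$. $\mathfrak S_{\triangle,r}$ is the group of permutations $w$ of $\mathbb Z$ with $w(i+r)=w(i)+r$; for $1\le i\le r$, $s_i$ swaps $j$ and $j+1$ for all $j\equiv i\pmod r$ and fixes other integers; $W_r=\langle s_1,\dots,s_r\rangle$ is a Coxeter group with length function $\ell$; with $\rho:j\mapsto j+1$, each $w\in\mathfrak S_{\triangle,r}$ is uniquely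 $\rho^ax$ ($x\in W_r$) and $\ell(\rho^ax):=\ell(x)$. For $\lambda\in\Lambda_\triangle(n,r)$, $\mathfrak S_\lambda$ is the standard Young subgroup $\mathfrak S_{(\lambda_1,\ldots,\lambda_n)}$ of $\mathfrak S_r=\langle s_1,\dots,s_{r-1}\rangle$; $\mathcal D_\lambda=\{d\in\mathfrak S_{\triangle,r}:\ell(wd)=\ell(w)+\ell(d)\ \forall w\in\mathfrak S_\lambda\}$, $\mathcal D_{\lambda,\mu}=\mathcal D_\lambda\cap\mathcal D_\mu^{-1}$. The bijection $\jmath_\triangle$ sends $(\lambda,d,\mu)$ with $d\in\mathcal D_{\lambda,\mu}$ to $A=(|R^\lambda_k\cap dR^\mu_l|)_{k,l\in\mathbb Z}\in\Theta_\triangle(n,r)$, where $R^\nu_{i+kn}=\{kr+\nu_1+\cdots+\nu_{i-1}+1,\ldots,kr+\nu_1+\cdots+\nu_i\}$ for $1\le i\le n$, $k\in\mathbb Z$. *)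

theory Defs
  imports Main
begin

type_synonym amat = "int \<Rightarrow> int \<Rightarrow> nat"

definition Theta :: "nat \<Rightarrow> amat set" where
  "Theta n = {A. (\<forall>i j. A (i + int n) (j + int n) = A i j)
                 \<and> (\<forall>i. finite {j. A i j \<noteq> 0}) \<and> (\<forall>j. finite {i. A i j \<noteq> 0})}"

definition sigma :: "nat \<Rightarrow> amat \<Rightarrow> nat" where
  "sigma n A = (\<Sum>(i, j)\<in>{(i, j). 1 \<le> i \<and> i \<le> int n \<and> A i j \<noteq> 0}. A i j)"

definition Theta_r :: "nat \<Rightarrow> nat \<Rightarrow> amat set" where
  "Theta_r n r = {A \<in> Theta n. sigma n A = r}"

definition co :: "amat \<Rightarrow> int \<Rightarrow> nat" where
  "co A j = (\<Sum>i\<in>{i. A i j \<noteq> 0}. A i j)"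

definition dA :: "nat \<Rightarrow> amat \<Rightarrow> nat" where
  "dA n A = (\<Sum>(i, j, k, l)\<in>{(i, j, k, l). 1 \<le> i \<and> i \<le> int n \<and> k \<le> i \<and> j < l
                                    \<and> A i j \<noteq> 0 \<and> A k l \<noteq> 0}. A i j * A k l)"

definition Lambda :: "nat \<Rightarrow> nat \<Rightarrow> (int \<Rightarrow> nat) set" where
  "Lambda n r = {lam. (\<forall>i. lam (i + int n) = lam i) \<and> (\<Sum>i=1..int n. lam i) = r}"

definition Rset :: "nat \<Rightarrow> nat \<Rightarrow> (int \<Rightarrow> nat) \<Rightarrow> int \<Rightarrow> int set" where
  "Rset n r nu m =
     (let i = (m - 1) mod int n + 1; k = (m - 1) div int n
      in {k * int r + (\<Sum>t=1..i-1. int (nu t)) + 1 .. k * int r + (\<Sum>t=1..i. int (nu t))})"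

definition aff_sym :: "nat \<Rightarrow> (int \<Rightarrow> int) set" where
  "aff_sym r = {w. bij w \<and> (\<forall>i. w (i + int r) = w i + int r)}"

definition sgen :: "nat \<Rightarrow> nat \<Rightarrow> int \<Rightarrow> int" where
  "sgen r i j = (if j mod int r = int i mod int r then j + 1
                 else if j mod int r = (int i + 1) mod int r then j - 1 else j)"

definition rho_pow :: "int \<Rightarrow> int \<Rightarrow> int" where
  "rho_pow a = (\<lambda>j. j + a)"

definition len :: "nat \<Rightarrow> (int \<Rightarrow> int) \<Rightarrow> nat" where
  "len r w = (LEAST k. \<exists>a ws. length ws = k \<and> set ws \<subseteq> {1..r}
                         \<and> w = rho_pow a \<circ> foldr (\<circ>) (map (sgen r) ws) id)"

text \<open>standard Young subgroup S_lambda of S_r, viewed inside the affine group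
  (the periodic permutations stabilising every block R^lambda_i)\<close>
definition Young :: "nat \<Rightarrow> nat \<Rightarrow> (int \<Rightarrow> nat) \<Rightarrow> (int \<Rightarrow> int) set" where
  "Young n r lam = {w \<in> aff_sym r. \<forall>m. w ` Rset n r lam m = Rset n r lam m}"

definition Dmin :: "nat \<Rightarrow> nat \<Rightarrow> (int \<Rightarrow> nat) \<Rightarrow> (int \<Rightarrow> int) set" where
  "Dmin n r lam = {d \<in> aff_sym r. \<forall>w \<in> Young n r lam. len r (w \<circ> d) = len r w + len r d}"

definition Dpair :: "nat \<Rightarrow> nat \<Rightarrow> (int \<Rightarrow> nat) \<Rightarrow> (int \<Rightarrow> nat) \<Rightarrow> (int \<Rightarrow> int) set" where
  "Dpair n r lam mu = Dmin n r lam \<inter> (\<lambda>d. inv d) ` Dmin n r mu"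

definition jmath :: "nat \<Rightarrow> nat \<Rightarrow> (int \<Rightarrow> nat) \<Rightarrow> (int \<Rightarrow> int) \<Rightarrow> (int \<Rightarrow> nat) \<Rightarrow> amat" where
  "jmath n r lam d mu = (\<lambda>k l. card (Rset n r lam k \<inter> d ` Rset n r mu l))"

definition dcoset :: "nat \<Rightarrow> nat \<Rightarrow> (int \<Rightarrow> nat) \<Rightarrow> (int \<Rightarrow> int) \<Rightarrow> (int \<Rightarrow> nat) \<Rightarrow> (int \<Rightarrow> int) set" where
  "dcoset n r lam y mu = {w \<circ> y \<circ> u | w u. w \<in> Young n r lam \<and> u \<in> Young n r mu}"

definition longest_in :: "nat \<Rightarrow> (int \<Rightarrow> int) set \<Rightarrow> (int \<Rightarrow> int) \<Rightarrow> bool" where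
  "longest_in r S x \<longleftrightarrow> x \<in> S \<and> (\<forall>z\<in>S. len r z \<le> len r x)"

end

theory Submission
  imports Defs
begin

text \<open>Identify the Coxeter length of an affine permutation with its number of inversions
  \<open>(i, j)\<close>, \<open>i < j\<close>, \<open>w i > w j\<close>, counted for \<open>1 \<le> i \<le> r\<close>. For \<open>z \<in> \<SS>\<^sub>\<lambda> y \<SS>\<^sub>\<mu>\<close> every
  inversion either lies inside one \<open>\<mu>\<close>-block, or joins two \<open>\<mu>\<close>-blocks in increasing order while \<open>z\<close>
  does not increase the \<open>\<lambda>\<close>-blocks; the number of pairs of the second kind depends only on the
  double coset and, sorting them by the cells \<open>R\<^sup>\<lambda>\<^sub>k \<inter> y R\<^sup>\<mu>\<^sub>l\<close> they occupy, equals \<open>d\<^sub>A\<close>.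
  The longest element \<open>y\<^sub>A\<^sup>+\<close> realises all of these pairs as inversions, since otherwise a simple
  reflection of \<open>\<SS>\<^sub>\<lambda>\<close> or \<open>\<SS>\<^sub>\<mu>\<close> would lengthen it; the pairs of the first kind number
  \<open>\<ell>(w\<^sub>0\<^sub>,\<^sub>\<mu>)\<close>, which is the case \<open>\<lambda> = \<mu>\<close>, \<open>y = 1\<close>.\<close>

lemma periodic_shift_mult:
  fixes f :: "int \<Rightarrow> 'a"
  assumes "\<And>x. f (x + p) = f x"
  shows "f (x + t * p) = f x"
proof -
  have nat_mult: "f (x + int k * p) = f x" for k x
  proof (induction k)
    case (Suc k)
    have "f (x + int (Suc k) * p) = f ((x + int k * p) + p)" by (simp add: algebra_simps)
    also have "\<dots> = f x" using assms Suc by simp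
    finally show ?case .
  qed simp
  show ?thesis
  proof (cases "t \<ge> 0")
    case True then show ?thesis using nat_mult[where k="nat t"] by simp
  next
    case False
    have "f ((x + t * p) + int (nat (- t)) * p) = f (x + t * p)" by (rule nat_mult)
    then show ?thesis using False by (simp add: algebra_simps)
  qed
qed

lemma equivariant_shift_mult:
  fixes f :: "int \<Rightarrow> int"
  assumes "\<And>x. f (x + p) = f x + p"
  shows "f (x + t * p) = f x + t * p"
proof -
  have "(\<lambda>x. f x - x) (x + t * p) = (\<lambda>x. f x - x) x"
    by (rule periodic_shift_mult) (simp add: assms)
  then show ?thesis by simp
qed

lemma strict_mono_int_chain:
  fixes f :: "int \<Rightarrow> 'a::linorder"
  assumes "\<And>j. a \<le> j \<Longrightarrow> j < b \<Longrightarrow> f j < f (j + 1)" and "a < b"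
  shows "f a < f b"
proof -
  have "f a < f (a + 1 + int k)" if "a + 1 + int k \<le> b" for k
    using that
  proof (induction k)
    case 0 then show ?case using assms(1)[of a] by simp
  next
    case (Suc k)
    have "f (a + 1 + int k) < f ((a + 1 + int k) + 1)" using Suc.prems by (intro assms(1)) auto
    then show ?case using Suc by (simp add: add.assoc)
  qed
  from this[of "nat (b - a - 1)"] assms(2) show ?thesis by simp
qed

lemma zero_if_abs_mult_less:
  fixes d k :: int
  assumes "\<bar>d * k\<bar> < k"
  shows "d = 0"
proof (rule ccontr)
  assume "d \<noteq> 0"
  have k: "0 < k" using assms abs_ge_zero[of "d * k"] by linarith
  have "1 * k \<le> \<bar>d\<bar> * k" using \<open>d \<noteq> 0\<close> k by (intro mult_right_mono) auto
  then show False using assms k by (simp add: abs_mult)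
qed

lemma not_dvd_consecutive: "r \<ge> 2 \<Longrightarrow> int r dvd a \<Longrightarrow> \<not> int r dvd (a + 1)"
  using dvd_diff[of "int r" "a + 1" a] zdvd_imp_le[of "int r" 1] by auto

lemma mod_plus_one_bounds: "r \<ge> 1 \<Longrightarrow> 1 \<le> (x - 1) mod int r + 1 \<and> (x - 1) mod int r + 1 \<le> int r"
  using pos_mod_bound[of "int r" "x - 1"] pos_mod_sign[of "int r" "x - 1"] by linarith

section \<open>Blocks of a periodic composition\<close>

locale periodic_composition =
  fixes n r :: nat and nu :: "int \<Rightarrow> nat"
  assumes n_pos: "n \<ge> 1" and r_pos: "r \<ge> 1" and nu_Lambda: "nu \<in> Lambda n r"
begin

definition psum :: "int \<Rightarrow> int" where "psum i = (\<Sum>t=1..i. int (nu t))"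

definition block_end :: "int \<Rightarrow> int" where
  "block_end m = (m div int n) * int r + psum (m mod int n)"

lemma psum_0 [simp]: "psum 0 = 0" by (simp add: psum_def)

lemma psum_succ: "0 \<le> i \<Longrightarrow> psum (i + 1) = psum i + int (nu (i + 1))"
  by (simp add: psum_def atLeastAtMostPlus1_int_conv add.commute)

lemma psum_n: "psum (int n) = int r"
proof -
  have "(\<Sum>i=1..int n. nu i) = r" using nu_Lambda by (simp add: Lambda_def)
  then show ?thesis unfolding psum_def by (metis of_nat_sum)
qed

lemma psum_mono: "0 \<le> i \<Longrightarrow> i \<le> j \<Longrightarrow> psum i \<le> psum j"
  unfolding psum_def by (rule sum_mono2) auto

lemma nu_periodic: "nu (x + t * int n) = nu x"
  by (rule periodic_shift_mult) (use nu_Lambda in \<open>simp add: Lambda_def\<close>)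

lemma block_end_eq: "0 \<le> i \<Longrightarrow> i \<le> int n \<Longrightarrow> block_end (q * int n + i) = q * int r + psum i"
proof -
  assume i: "0 \<le> i" "i \<le> int n"
  show ?thesis
  proof (cases "i = int n")
    case True
    have "block_end ((q + 1) * int n + 0) = (q + 1) * int r" using n_pos by (simp add: block_end_def)
    then show ?thesis using True psum_n by (simp add: algebra_simps)
  next
    case False
    then show ?thesis using i by (simp add: block_end_def)
  qed
qed

lemma block_end_shift: "block_end (m + t * int n) = block_end m + t * int r"
  using n_pos by (simp add: block_end_def algebra_simps)

lemma block_end_0: "block_end 0 = 0" by (simp add: block_end_def)

lemma block_end_n: "block_end (int n) = int r" using n_pos by (simp add: block_end_def)

lemma block_end_succ_ge: "block_end m \<le> block_end (m + 1)"
proof -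
  define q i where "q = m div int n" and "i = m mod int n"
  have i: "0 \<le> i" "i < int n" using n_pos by (auto simp: i_def)
  have m: "m = q * int n + i" by (simp add: q_def i_def)
  have "block_end m = q * int r + psum i" using m i block_end_eq[of i q] by simp
  moreover have "block_end (m + 1) = q * int r + psum (i + 1)"
    using m i block_end_eq[of "i + 1" q] by (simp add: add.assoc)
  ultimately show ?thesis using i psum_mono[of i "i + 1"] by simp
qed

lemma block_end_mono: "a \<le> b \<Longrightarrow> block_end a \<le> block_end b"
proof -
  have "block_end a \<le> block_end (a + int k)" for k
  proof (induction k)
    case (Suc k)
    have "block_end (a + int k) \<le> block_end (a + int (Suc k))"
      using block_end_succ_ge[of "a + int k"] by (simp add: ac_simps)
    then show ?case using Suc by linarith
  qed simp
  from this[of "nat (b - a)"] show "a \<le> b \<Longrightarrow> ?thesis" by simp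
qed

lemma block_end_gap: "block_end m \<le> block_end (m - 1) + int r"
  using block_end_mono[of m "m - 1 + int n"] block_end_shift[of "m - 1" 1] n_pos by simp

lemma Rset_eq: "Rset n r nu m = {block_end (m - 1) + 1 .. block_end m}"
proof -
  define k j where "k = (m - 1) div int n" and "j = (m - 1) mod int n"
  have j: "0 \<le> j" "j < int n" using n_pos by (auto simp: j_def)
  have m: "m - 1 = k * int n + j" "m = k * int n + (j + 1)" by (simp_all add: k_def j_def)
  have "Rset n r nu m = {k * int r + psum j + 1 .. k * int r + psum (j + 1)}"
    by (simp add: Rset_def Let_def psum_def k_def[symmetric] j_def[symmetric])
  then show ?thesis using m j block_end_eq by simp
qed

lemma finite_Rset: "finite (Rset n r nu m)" by (simp add: Rset_eq)

lemma card_Rset: "card (Rset n r nu m) = nu m"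
proof -
  define k j where "k = (m - 1) div int n" and "j = (m - 1) mod int n"
  have j: "0 \<le> j" "j < int n" using n_pos by (auto simp: j_def)
  have m: "m - 1 = k * int n + j" "m = (j + 1) + k * int n" by (simp_all add: k_def j_def)
  have "card (Rset n r nu m) = nat (psum (j + 1) - psum j)"
    using m j block_end_eq[of j k] block_end_eq[of "j + 1" k] by (simp add: Rset_eq add.commute)
  also have "\<dots> = nu m" using psum_succ j nu_periodic[of "j + 1" k] m by simp
  finally show ?thesis .
qed

lemma block_exists: "\<exists>m. block_end (m - 1) < a \<and> a \<le> block_end m"
proof -
  define t0 where "t0 = min a 0 - 1"
  define t1 where "t1 = max a 0"
  have period_mult: "block_end (t * int n) = t * int r" for t
    using block_end_shift[of 0 t] block_end_0 by simp
  have t0: "t0 < 0" "t0 < a" by (auto simp: t0_def)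
  have "t0 * int r \<le> t0 * 1" using r_pos t0 by (intro mult_left_mono_neg) auto
  then have below: "block_end (t0 * int n) < a" using period_mult[of t0] t0 by linarith
  have "t1 * 1 \<le> t1 * int r" using r_pos by (intro mult_left_mono) (auto simp: t1_def)
  then have above: "a \<le> block_end (t1 * int n)" using period_mult[of t1] by (simp add: t1_def)
  define S where "S = {j::nat. a \<le> block_end (t0 * int n + int j)}"
  have "t0 \<le> t1" by (simp add: t0_def t1_def)
  then have "nat ((t1 - t0) * int n) \<in> S" using above n_pos by (simp add: S_def algebra_simps)
  then have j: "(LEAST j. j \<in> S) \<in> S" by (rule LeastI)
  define j where "j = (LEAST j. j \<in> S)"
  have "j \<noteq> 0"
  proof
    assume "j = 0" then show False using j below by (simp add: S_def j_def)
  qed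
  moreover have "j - 1 \<notin> S" using not_less_Least[of "j - 1" "\<lambda>j. j \<in> S"] \<open>j \<noteq> 0\<close> by (simp add: j_def)
  ultimately have "block_end (t0 * int n + int j - 1) < a" by (simp add: S_def of_nat_diff algebra_simps)
  then show ?thesis using j by (intro exI[of _ "t0 * int n + int j"]) (simp add: S_def j_def)
qed

lemma block_unique:
  assumes "block_end (m - 1) < a" "a \<le> block_end m" "block_end (m' - 1) < a" "a \<le> block_end m'"
  shows "m = m'"
  using block_end_mono[of m "m' - 1"] block_end_mono[of m' "m - 1"] assms by fastforce

definition block :: "int \<Rightarrow> int" where
  "block a = (THE m. block_end (m - 1) < a \<and> a \<le> block_end m)"

lemma block_bounds: "block_end (block a - 1) < a" "a \<le> block_end (block a)"
proof -
  obtain m where m: "block_end (m - 1) < a" "a \<le> block_end m" using block_exists by blast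
  have "block a = m" unfolding block_def using m block_unique by blast
  then show "block_end (block a - 1) < a" "a \<le> block_end (block a)" using m by auto
qed

lemma block_eqI: "block_end (m - 1) < a \<Longrightarrow> a \<le> block_end m \<Longrightarrow> block a = m"
  using block_bounds block_unique by blast

lemma mem_Rset_iff_block: "a \<in> Rset n r nu m \<longleftrightarrow> block a = m"
  using block_bounds[of a] block_eqI[of m a] by (auto simp: Rset_eq)

lemma block_mono: "a \<le> b \<Longrightarrow> block a \<le> block b"
  using block_bounds[of a] block_bounds[of b] block_end_mono[of "block b" "block a - 1"] by fastforce

lemma less_if_block_less: "block a < block b \<Longrightarrow> a < b"
  using block_mono[of b a] by linarith

lemma block_shift: "block (a + t * int r) = block a + t * int n"
  using block_bounds[of a] block_end_shift[of "block a" t] block_end_shift[of "block a - 1" t]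
  by (intro block_eqI) (simp_all add: algebra_simps)

lemma block_window_iff: "1 \<le> a \<and> a \<le> int r \<longleftrightarrow> 1 \<le> block a \<and> block a \<le> int n"
proof
  assume a: "1 \<le> a \<and> a \<le> int r"
  show "1 \<le> block a \<and> block a \<le> int n"
  proof (rule ccontr)
    assume "\<not> (1 \<le> block a \<and> block a \<le> int n)"
    then consider "block a \<le> 0" | "int n + 1 \<le> block a" by linarith
    then show False
    proof cases
      case 1
      then show False using block_end_mono[of "block a" 0] block_end_0 block_bounds[of a] a by simp
    next
      case 2
      then show False
        using block_end_mono[of "int n" "block a - 1"] block_end_n block_bounds[of a] a by simp
    qed
  qed
next
  assume "1 \<le> block a \<and> block a \<le> int n"
  then show "1 \<le> a \<and> a \<le> int r"
    using block_end_mono[of 0 "block a - 1"] block_end_0 block_end_mono[of "block a" "int n"]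
      block_end_n block_bounds[of a] by simp
qed

lemma less_add_r_if_block_le: "block b \<le> block a \<Longrightarrow> b < a + int r"
  using block_bounds[of a] block_bounds[of b] block_end_mono[of "block b" "block a"]
    block_end_gap[of "block a"] by simp

lemma r_ge_2_if_block_eq_succ: "block j = block (j + 1) \<Longrightarrow> r \<ge> 2"
  using block_bounds[of j] block_bounds[of "j + 1"] block_end_gap[of "block j"] by simp

lemma block_eq_between: "block a = block b \<Longrightarrow> a \<le> c \<Longrightarrow> c \<le> b \<Longrightarrow> block c = block a"
  using block_mono[of a c] block_mono[of c b] by simp

end

lemma aff_sym_bij: "w \<in> aff_sym r \<Longrightarrow> bij w"
  by (simp add: aff_sym_def)

lemma aff_sym_shift: "w \<in> aff_sym r \<Longrightarrow> w (x + t * int r) = w x + t * int r"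
  by (rule equivariant_shift_mult) (simp add: aff_sym_def)

lemma aff_sym_comp: "w \<in> aff_sym r \<Longrightarrow> u \<in> aff_sym r \<Longrightarrow> w \<circ> u \<in> aff_sym r"
  by (auto simp: aff_sym_def bij_comp)

lemma aff_sym_id: "id \<in> aff_sym r"
  by (simp add: aff_sym_def)

lemma aff_sym_eq_iff: "w \<in> aff_sym r \<Longrightarrow> w x = w y \<longleftrightarrow> x = y"
  by (auto simp: aff_sym_def bij_def inj_def)

lemma aff_sym_inv_f: "w \<in> aff_sym r \<Longrightarrow> inv w (w x) = x"
  and aff_sym_f_inv: "w \<in> aff_sym r \<Longrightarrow> w (inv w x) = x"
  by (auto simp: aff_sym_def bij_def surj_f_inv_f)

lemma aff_sym_inv: "w \<in> aff_sym r \<Longrightarrow> inv w \<in> aff_sym r"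
proof -
  assume w: "w \<in> aff_sym r"
  have "inv w (i + int r) = inv w i + int r" for i
  proof -
    have "w (inv w i + int r) = i + int r"
      using w aff_sym_f_inv[OF w] by (simp add: aff_sym_def)
    then show ?thesis using aff_sym_inv_f[OF w] by metis
  qed
  then show ?thesis using w by (simp add: aff_sym_def bij_imp_bij_inv)
qed

lemma aff_sym_bounded_displacement:
  assumes w: "w \<in> aff_sym r" and r: "r \<ge> 1"
  shows "\<exists>M. \<forall>x. \<bar>w x - x\<bar> \<le> M"
proof -
  have "\<bar>w x - x\<bar> \<le> Max ((\<lambda>x. \<bar>w x - x\<bar>) ` {1..int r})" for x
  proof -
    define x' where "x' = (x - 1) mod int r + 1"
    have x: "x = x' + ((x - 1) div int r) * int r" by (simp add: x'_def)
    have "x' \<in> {1..int r}" using mod_plus_one_bounds[OF r] by (simp add: x'_def)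
    moreover have "w x - x = w x' - x'" using aff_sym_shift[OF w, of x' "(x - 1) div int r"] x by simp
    ultimately show ?thesis by simp
  qed
  then show ?thesis by blast
qed

text \<open>Sets of pairs stable under the diagonal shift by \<open>r\<close> are counted in the window of
  pairs whose first entry lies in \<open>{1..r}\<close>; any other equivariant coordinate gives the same count.\<close>

definition shift_pair :: "nat \<Rightarrow> int \<Rightarrow> int \<times> int \<Rightarrow> int \<times> int" where
  "shift_pair r t x = (fst x + t * int r, snd x + t * int r)"

definition window :: "nat \<Rightarrow> (int \<times> int) set \<Rightarrow> (int \<times> int) set" where
  "window r S = {x\<in>S. fst x \<in> {1..int r}}"

lemma shift_pair_shift_pair [simp]: "shift_pair r s (shift_pair r t x) = shift_pair r (s + t) x"
  by (simp add: shift_pair_def algebra_simps)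

lemma shift_pair_0 [simp]: "shift_pair r 0 x = x"
  by (simp add: shift_pair_def)

lemma fundamental_domain_embeds:
  fixes S :: "(int \<times> int) set" and f g :: "int \<times> int \<Rightarrow> int"
  assumes r: "r \<ge> 1" and S: "\<And>x t. x \<in> S \<Longrightarrow> shift_pair r t x \<in> S"
    and f: "\<And>x t. f (shift_pair r t x) = f x + t * int r"
    and g: "\<And>x t. g (shift_pair r t x) = g x + t * int r"
  shows "\<exists>h. inj_on h {x\<in>S. f x \<in> {1..int r}} \<and> h ` {x\<in>S. f x \<in> {1..int r}} \<subseteq> {x\<in>S. g x \<in> {1..int r}}"
proof (intro exI conjI)
  let ?h = "\<lambda>x. shift_pair r (- ((g x - 1) div int r)) x"
  show "inj_on ?h {x\<in>S. f x \<in> {1..int r}}"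
  proof (rule inj_onI)
    fix x y assume x: "x \<in> {x\<in>S. f x \<in> {1..int r}}" and y: "y \<in> {x\<in>S. f x \<in> {1..int r}}"
      and e: "?h x = ?h y"
    define kx ky where "kx = (g x - 1) div int r" and "ky = (g y - 1) div int r"
    have "shift_pair r kx (?h x) = shift_pair r kx (?h y)" using e by simp
    then have xy: "x = shift_pair r (kx - ky) y" by (simp add: kx_def ky_def)
    then have "f x = f y + (kx - ky) * int r" using f by simp
    then have "\<bar>(kx - ky) * int r\<bar> < int r" using x y by auto
    then have "kx - ky = 0" by (rule zero_if_abs_mult_less)
    then show "x = y" using xy by simp
  qed
  show "?h ` {x\<in>S. f x \<in> {1..int r}} \<subseteq> {x\<in>S. g x \<in> {1..int r}}"
  proof
    fix z assume "z \<in> ?h ` {x\<in>S. f x \<in> {1..int r}}"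
    then obtain x where x: "x \<in> S" and z: "z = ?h x" by auto
    have "g z = (g x - 1) mod int r + 1" using g z by (simp add: minus_div_mult_eq_mod[symmetric])
    then show "z \<in> {x\<in>S. g x \<in> {1..int r}}" using S x z mod_plus_one_bounds[OF r] by simp
  qed
qed

lemma card_fundamental_domains_eq:
  fixes S :: "(int \<times> int) set" and f g :: "int \<times> int \<Rightarrow> int"
  assumes r: "r \<ge> 1" and S: "\<And>x t. x \<in> S \<Longrightarrow> shift_pair r t x \<in> S"
    and f: "\<And>x t. f (shift_pair r t x) = f x + t * int r"
    and g: "\<And>x t. g (shift_pair r t x) = g x + t * int r"
  shows "card {x\<in>S. f x \<in> {1..int r}} = card {x\<in>S. g x \<in> {1..int r}}"
    and "finite {x\<in>S. f x \<in> {1..int r}} \<longleftrightarrow> finite {x\<in>S. g x \<in> {1..int r}}"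
proof -
  let ?A = "{x\<in>S. f x \<in> {1..int r}}" and ?B = "{x\<in>S. g x \<in> {1..int r}}"
  obtain h where h: "inj_on h ?A" "h ` ?A \<subseteq> ?B"
    using fundamental_domain_embeds[OF r S f g] by blast
  obtain h' where h': "inj_on h' ?B" "h' ` ?B \<subseteq> ?A"
    using fundamental_domain_embeds[OF r S g f] by blast
  show fin: "finite ?A \<longleftrightarrow> finite ?B"
  proof
    assume "finite ?B"
    then show "finite ?A" using h by (meson finite_imageD finite_subset)
  next
    assume "finite ?A"
    then show "finite ?B" using h' by (meson finite_imageD finite_subset)
  qed
  show "card ?A = card ?B"
  proof (cases "finite ?B")
    case True
    then show ?thesis using h h' fin by (intro antisym card_inj_on_le) auto
  next
    case False
    then show ?thesis using fin by simp
  qed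
qed

section \<open>Simple reflections and inversions\<close>

text \<open>\<open>simple_refl r c\<close> is \<open>s\<^sub>c\<close> for an arbitrary integer index \<open>c\<close>, which only matters modulo \<open>r\<close>;
  for \<open>r = 1\<close> it degenerates to the translation \<open>\<rho>\<close>.\<close>
definition simple_refl :: "nat \<Rightarrow> int \<Rightarrow> int \<Rightarrow> int" where
  "simple_refl r c j = (if j mod int r = c mod int r then j + 1
                        else if j mod int r = (c + 1) mod int r then j - 1 else j)"

lemma sgen_eq_simple_refl: "sgen r i = simple_refl r (int i)"
  by (simp add: fun_eq_iff sgen_def simple_refl_def)

lemma simple_refl_dvd:
  "simple_refl r c j = (if int r dvd (j - c) then j + 1 else if int r dvd (j - c - 1) then j - 1 else j)"
  by (simp add: simple_refl_def mod_eq_dvd_iff diff_diff_eq)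

lemma simple_refl_mod_eq: "c mod int r = c' mod int r \<Longrightarrow> simple_refl r c = simple_refl r c'"
  by (simp add: fun_eq_iff simple_refl_def mod_add_left_eq[symmetric, of c 1] mod_add_left_eq[symmetric, of c' 1])

lemma simple_refl_shift: "simple_refl r c (x + t * int r) = simple_refl r c x + t * int r"
proof -
  have "int r dvd (x + t * int r - c) \<longleftrightarrow> int r dvd (x - c)"
    and "int r dvd (x + t * int r - c - 1) \<longleftrightarrow> int r dvd (x - c - 1)"
    by (metis add.commute add_diff_eq diff_add_eq dvd_add_times_triv_left_iff mult.commute)+
  then show ?thesis by (simp add: simple_refl_dvd)
qed

lemma simple_refl_up: "int r dvd (p - c) \<Longrightarrow> simple_refl r c p = p + 1"
  by (simp add: simple_refl_dvd)

lemma simple_refl_down: "r \<ge> 2 \<Longrightarrow> int r dvd (p - c - 1) \<Longrightarrow> simple_refl r c p = p - 1"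
  using not_dvd_consecutive[of r "p - c - 1"] by (auto simp: simple_refl_dvd)

lemma simple_refl_c: "simple_refl r c c = c + 1"
  by (simp add: simple_refl_up)

lemma simple_refl_c_succ: "r \<ge> 2 \<Longrightarrow> simple_refl r c (c + 1) = c"
  by (simp add: simple_refl_down)

lemma simple_refl_simple_refl: "r \<ge> 2 \<Longrightarrow> simple_refl r c (simple_refl r c x) = x"
proof -
  assume r: "r \<ge> 2"
  consider "int r dvd (x - c)" | "\<not> int r dvd (x - c)" "int r dvd (x - c - 1)"
    | "\<not> int r dvd (x - c)" "\<not> int r dvd (x - c - 1)" by blast
  then show ?thesis
  proof cases
    case 1
    then show ?thesis using simple_refl_up simple_refl_down[OF r, of "x + 1"] by simp
  next
    case 2
    then have "int r dvd (x - 1 - c)" by (simp add: algebra_simps)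
    then show ?thesis using 2 simple_refl_down[OF r] simple_refl_up by simp
  next
    case 3
    then show ?thesis by (simp add: simple_refl_dvd)
  qed
qed

lemma simple_refl_comp_simple_refl: "r \<ge> 2 \<Longrightarrow> simple_refl r c \<circ> simple_refl r c = id"
  by (simp add: fun_eq_iff simple_refl_simple_refl)

lemma simple_refl_aff_sym: "r \<ge> 1 \<Longrightarrow> simple_refl r c \<in> aff_sym r"
proof -
  assume r: "r \<ge> 1"
  have per: "simple_refl r c (i + int r) = simple_refl r c i + int r" for i
    using simple_refl_shift[of r c i 1] by simp
  have "bij (simple_refl r c)"
  proof (cases "r = 1")
    case True
    then show ?thesis by (intro bij_betw_byWitness[where f'="\<lambda>j. j - 1"]) (auto simp: simple_refl_def)
  next
    case False
    then show ?thesis using r simple_refl_simple_refl[of r c]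
      by (intro bij_betw_byWitness[where f'="simple_refl r c"]) auto
  qed
  then show ?thesis using per by (simp add: aff_sym_def)
qed

lemma simple_refl_less:
  assumes r: "r \<ge> 2" and pq: "p < q" and not_swapped: "\<not> (int r dvd (p - c) \<and> q = p + 1)"
  shows "simple_refl r c p < simple_refl r c q"
proof -
  have a1: "\<not> (int r dvd (p - c) \<and> int r dvd (p + 1 - c))"
    using not_dvd_consecutive[OF r, of "p - c"] by (auto simp: algebra_simps)
  have a2: "\<not> (int r dvd (x - c - 1) \<and> int r dvd (x - c))" for x
    using not_dvd_consecutive[OF r, of "x - c - 1"] by auto
  consider "q = p + 1" | "q = p + 2" | "q \<ge> p + 3" using pq by linarith
  then show ?thesis
  proof cases
    case 1
    then show ?thesis using not_swapped a2[of p] a2[of q] by (simp add: simple_refl_dvd)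
  next
    case 2
    then have "int r dvd (q - c - 1) \<longleftrightarrow> int r dvd (p + 1 - c)" by (simp add: algebra_simps)
    then show ?thesis using 2 a1 a2[of p] a2[of q] by (auto simp: simple_refl_dvd)
  next
    case 3
    then show ?thesis by (simp add: simple_refl_dvd)
  qed
qed

definition exchanged_pairs :: "nat \<Rightarrow> int \<Rightarrow> (int \<times> int) set" where
  "exchanged_pairs r c = {x. int r dvd (fst x - c) \<and> snd x = fst x + 1}"

definition inversions :: "(int \<Rightarrow> int) \<Rightarrow> (int \<times> int) set" where
  "inversions w = {x. fst x < snd x \<and> w (snd x) < w (fst x)}"

definition inv_number :: "nat \<Rightarrow> (int \<Rightarrow> int) \<Rightarrow> nat" where
  "inv_number r w = card (window r (inversions w))"

lemma inversions_shift_pair: "w \<in> aff_sym r \<Longrightarrow> x \<in> inversions w \<Longrightarrow> shift_pair r t x \<in> inversions w"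
  by (simp add: inversions_def shift_pair_def aff_sym_shift)

lemma finite_window_inversions:
  assumes w: "w \<in> aff_sym r" and r: "r \<ge> 1"
  shows "finite (window r (inversions w))"
proof -
  obtain M where M: "\<And>x. \<bar>w x - x\<bar> \<le> M" using aff_sym_bounded_displacement[OF w r] by blast
  have "window r (inversions w) \<subseteq> {1..int r} \<times> {1..int r + 2 * M}"
  proof
    fix x assume x: "x \<in> window r (inversions w)"
    then show "x \<in> {1..int r} \<times> {1..int r + 2 * M}"
      using M[of "fst x"] M[of "snd x"] by (cases x) (auto simp: window_def inversions_def)
  qed
  then show ?thesis by (rule finite_subset) simp
qed

lemma aff_sym_diff_periodic:
  assumes w: "w \<in> aff_sym r" and d: "int r dvd (p - c)"
  shows "w (p + e) - w p = w (c + e) - w c"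
proof -
  obtain k where "p = c + k * int r" using d by (auto simp: dvd_def algebra_simps)
  then show ?thesis using aff_sym_shift[OF w, of c k] aff_sym_shift[OF w, of "c + e" k]
    by (simp add: algebra_simps)
qed

lemma inversions_comp_simple_refl:
  assumes r: "r \<ge> 2" and w: "w \<in> aff_sym r" and asc: "w c < w (c + 1)"
  defines "s \<equiv> simple_refl r c"
  shows "inversions (w \<circ> s) = {x. (s (fst x), s (snd x)) \<in> inversions w} \<union> exchanged_pairs r c"
    and "{x. (s (fst x), s (snd x)) \<in> inversions w} \<inter> exchanged_pairs r c = {}"
proof -
  have swapped: "s p = p + 1 \<and> s (p + 1) = p \<and> w p < w (p + 1)" if "int r dvd (p - c)" for p
    using that simple_refl_up simple_refl_down[OF r, of "p + 1" c]
      aff_sym_diff_periodic[OF w that, of 1] asc by (simp add: s_def)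
  show "{x. (s (fst x), s (snd x)) \<in> inversions w} \<inter> exchanged_pairs r c = {}"
    using swapped by (auto simp: inversions_def exchanged_pairs_def)
  have order: "s p < s q" if "p < q" "\<not> (int r dvd (p - c) \<and> q = p + 1)" for p q
    using simple_refl_less[OF r that] by (simp add: s_def)
  show "inversions (w \<circ> s) = {x. (s (fst x), s (snd x)) \<in> inversions w} \<union> exchanged_pairs r c"
  proof (intro set_eqI iffI)
    fix x assume "x \<in> inversions (w \<circ> s)"
    then show "x \<in> {x. (s (fst x), s (snd x)) \<in> inversions w} \<union> exchanged_pairs r c"
      using order[of "fst x" "snd x"] by (auto simp: inversions_def exchanged_pairs_def)
  next
    fix x assume x: "x \<in> {x. (s (fst x), s (snd x)) \<in> inversions w} \<union> exchanged_pairs r c"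
    obtain p q where pq: "x = (p, q)" by force
    have "p < q"
    proof (rule ccontr)
      assume "\<not> p < q"
      moreover have "p \<noteq> q" using x by (auto simp: pq inversions_def exchanged_pairs_def)
      ultimately have "q < p" by simp
      moreover have "(s p, s q) \<in> inversions w" using x \<open>\<not> p < q\<close> by (auto simp: pq exchanged_pairs_def)
      ultimately show False
        using order[of q p] swapped[of q] by (cases "int r dvd (q - c) \<and> p = q + 1") (auto simp: inversions_def)
    qed
    then show "x \<in> inversions (w \<circ> s)"
      using x swapped[of p] by (auto simp: pq inversions_def exchanged_pairs_def)
  qed
qed

lemma card_window_exchanged_pairs:
  assumes r: "r \<ge> 2"
  shows "card (window r (exchanged_pairs r c)) = 1"
proof -
  define j0 where "j0 = (c - 1) mod int r + 1"
  have j0: "1 \<le> j0" "j0 \<le> int r" using mod_plus_one_bounds[of r] r by (simp_all add: j0_def)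
  have "j0 - c = - ((c - 1) div int r * int r)"
    unfolding j0_def using div_mult_mod_eq[of "c - 1" "int r"] by linarith
  then have j0_class: "int r dvd (j0 - c)" by simp
  have unique: "p = j0" if "int r dvd (p - c)" "1 \<le> p" "p \<le> int r" for p
  proof -
    have "int r dvd (p - j0)" using dvd_diff[OF \<open>int r dvd (p - c)\<close> j0_class] by simp
    then obtain k where k: "p - j0 = k * int r" by (auto simp: dvd_def mult.commute)
    have "\<bar>k * int r\<bar> < int r" unfolding k[symmetric] using that j0 by linarith
    then have "k = 0" by (rule zero_if_abs_mult_less)
    then show ?thesis using k by simp
  qed
  have "window r (exchanged_pairs r c) = {(j0, j0 + 1)}"
  proof (rule set_eqI, rule iffI)
    fix x assume "x \<in> window r (exchanged_pairs r c)"
    then show "x \<in> {(j0, j0 + 1)}"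
      using unique[of "fst x"] by (cases x) (simp add: window_def exchanged_pairs_def)
  next
    fix x assume "x \<in> {(j0, j0 + 1)}"
    then show "x \<in> window r (exchanged_pairs r c)"
      using j0 j0_class by (simp add: window_def exchanged_pairs_def)
  qed
  then show ?thesis by simp
qed

lemma card_window_conj_inversions:
  fixes c :: int
  assumes r: "r \<ge> 2" and w: "w \<in> aff_sym r"
  defines "s \<equiv> simple_refl r c"
  shows "card (window r {x. (s (fst x), s (snd x)) \<in> inversions w}) = inv_number r w"
proof -
  let ?sig = "\<lambda>x. (s (fst x), s (snd x))"
  have s_s: "s (s y) = y" for y by (simp add: s_def simple_refl_simple_refl[OF r])
  then have sig_sig: "?sig (?sig x) = x" for x by simp
  have "window r {x. ?sig x \<in> inversions w} = ?sig ` {x\<in>inversions w. s (fst x) \<in> {1..int r}}"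
  proof (rule set_eqI, rule iffI)
    fix x assume "x \<in> window r {x. ?sig x \<in> inversions w}"
    then show "x \<in> ?sig ` {x\<in>inversions w. s (fst x) \<in> {1..int r}}"
      by (intro rev_image_eqI[of "?sig x"]) (auto simp: window_def s_s)
  next
    fix x assume "x \<in> ?sig ` {x\<in>inversions w. s (fst x) \<in> {1..int r}}"
    then show "x \<in> window r {x. ?sig x \<in> inversions w}" by (auto simp: window_def s_s)
  qed
  moreover have "inj ?sig"
  proof (rule injI)
    fix x y assume "?sig x = ?sig y"
    then have "?sig (?sig x) = ?sig (?sig y)" by (simp only:)
    then show "x = y" by (simp only: sig_sig)
  qed
  ultimately have "card (window r {x. ?sig x \<in> inversions w})
                     = card {x\<in>inversions w. s (fst x) \<in> {1..int r}}"
    by (simp add: card_image inj_on_subset[of ?sig UNIV])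
  also have "\<dots> = card {x\<in>inversions w. fst x \<in> {1..int r}}"
    by (rule card_fundamental_domains_eq(1), use r in simp, erule inversions_shift_pair[OF w])
      (simp_all add: shift_pair_def s_def simple_refl_shift)
  finally show ?thesis by (simp add: inv_number_def window_def)
qed

lemma inv_number_comp_simple_refl:
  assumes r: "r \<ge> 2" and w: "w \<in> aff_sym r" and asc: "w c < w (c + 1)"
  shows "inv_number r (w \<circ> simple_refl r c) = inv_number r w + 1"
proof -
  let ?s = "simple_refl r c"
  let ?P = "{x. (?s (fst x), ?s (snd x)) \<in> inversions w}" and ?E = "exchanged_pairs r c"
  note split = inversions_comp_simple_refl[OF r w asc]
  have fin: "finite (window r (inversions (w \<circ> ?s)))"
    using r by (intro finite_window_inversions aff_sym_comp[OF w] simple_refl_aff_sym) auto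
  have "window r (inversions (w \<circ> ?s)) = window r ?P \<union> window r ?E"
    "window r ?P \<inter> window r ?E = {}"
    using split by (auto simp: window_def)
  moreover have "finite (window r ?P)" "finite (window r ?E)"
    using fin split(1) by (auto simp: window_def elim: finite_subset[rotated])
  ultimately have "inv_number r (w \<circ> ?s) = card (window r ?P) + card (window r ?E)"
    by (simp add: inv_number_def card_Un_disjoint)
  then show ?thesis using card_window_conj_inversions[OF r w] card_window_exchanged_pairs[OF r] by simp
qed

lemma inv_number_inv:
  assumes w: "w \<in> aff_sym r" and r: "r \<ge> 1"
  shows "inv_number r (inv w) = inv_number r w"
proof -
  let ?phi = "\<lambda>x. (w (snd x), w (fst x))"
  have "window r (inversions (inv w)) = ?phi ` {x\<in>inversions w. w (snd x) \<in> {1..int r}}"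
  proof (rule set_eqI, rule iffI)
    fix x assume "x \<in> window r (inversions (inv w))"
    then show "x \<in> ?phi ` {x\<in>inversions w. w (snd x) \<in> {1..int r}}"
      by (intro rev_image_eqI[of "(inv w (snd x), inv w (fst x))"])
        (auto simp: window_def inversions_def aff_sym_inv_f[OF w] aff_sym_f_inv[OF w])
  next
    fix x assume "x \<in> ?phi ` {x\<in>inversions w. w (snd x) \<in> {1..int r}}"
    then show "x \<in> window r (inversions (inv w))"
      by (auto simp: window_def inversions_def aff_sym_inv_f[OF w])
  qed
  moreover have "inj ?phi" by (rule injI) (simp add: aff_sym_eq_iff[OF w] prod_eq_iff)
  ultimately have "inv_number r (inv w) = card {x\<in>inversions w. w (snd x) \<in> {1..int r}}"
    by (simp add: inv_number_def card_image inj_on_subset[of ?phi UNIV])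
  also have "\<dots> = card {x\<in>inversions w. fst x \<in> {1..int r}}"
    by (rule card_fundamental_domains_eq(1)[OF r], erule inversions_shift_pair[OF w])
      (simp_all add: shift_pair_def aff_sym_shift[OF w])
  finally show ?thesis by (simp add: inv_number_def window_def)
qed

lemma inv_number_rho_pow: "inv_number r (rho_pow a \<circ> w) = inv_number r w"
  by (simp add: inv_number_def inversions_def rho_pow_def)

lemma inversions_ascending: "(\<And>j. w j < w (j + 1)) \<Longrightarrow> inversions w = {}"
  using strict_mono_int_chain[of _ _ w] by (force simp: inversions_def)

lemma translation_if_ascending:
  assumes w: "w \<in> aff_sym r" and asc: "\<And>j. w j < w (j + 1)"
  shows "w = rho_pow (w 0)"
proof -
  have mono: "a \<le> b \<Longrightarrow> w a \<le> w b" for a b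
    using strict_mono_int_chain[of a b w] asc by (cases "a = b") auto
  have step: "w (j + 1) = w j + 1" for j
  proof -
    obtain x where x: "w x = w j + 1" using aff_sym_bij[OF w] by (metis bij_pointE)
    show ?thesis
      using mono[of x j] mono[of "j + 1" x] x asc[of j] by (cases "x \<le> j") auto
  qed
  have "w x = x + w 0" for x
    using equivariant_shift_mult[of w 1 0 x, OF step] by simp
  then show ?thesis unfolding rho_pow_def by (rule ext)
qed

lemma inv_number_comp_simple_refl_le:
  assumes r: "r \<ge> 1" and w: "w \<in> aff_sym r"
  shows "inv_number r (w \<circ> simple_refl r c) \<le> inv_number r w + 1"
proof (cases "r = 1")
  case True
  let ?u = "w \<circ> simple_refl r c"
  have "?u \<in> aff_sym 1" using aff_sym_comp[OF w simple_refl_aff_sym[OF r]] True by simp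
  then have "?u j < ?u (j + 1)" for j using aff_sym_shift[of ?u 1 j 1] by simp
  then show ?thesis by (simp add: inv_number_def inversions_ascending window_def)
next
  case False
  then have r2: "r \<ge> 2" using r by simp
  let ?s = "simple_refl r c"
  show ?thesis
  proof (cases "w c < w (c + 1)")
    case True
    then show ?thesis using inv_number_comp_simple_refl[OF r2 w True] by simp
  next
    case False
    moreover have "w c \<noteq> w (c + 1)" using aff_sym_eq_iff[OF w, of c "c + 1"] by simp
    ultimately have "(w \<circ> ?s) c < (w \<circ> ?s) (c + 1)"
      using simple_refl_c simple_refl_c_succ[OF r2] by simp
    from inv_number_comp_simple_refl[OF r2 aff_sym_comp[OF w simple_refl_aff_sym[OF r]] this]
    have "inv_number r w = inv_number r (w \<circ> ?s) + 1"
      unfolding comp_assoc simple_refl_comp_simple_refl[OF r2] comp_id .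
    then show ?thesis by simp
  qed
qed

lemma foldr_comp_eq_comp: "foldr (\<circ>) fs h = foldr (\<circ>) fs id \<circ> h"
  by (induction fs) auto

lemma word_aff_sym_inv_number_le:
  assumes r: "r \<ge> 1" and ws: "set ws \<subseteq> {1..r}"
  shows "foldr (\<circ>) (map (sgen r) ws) id \<in> aff_sym r
         \<and> inv_number r (foldr (\<circ>) (map (sgen r) ws) id) \<le> length ws"
  using ws
proof (induction ws rule: rev_induct)
  case Nil
  have "inversions id = {}" by (auto simp: inversions_def)
  then show ?case using aff_sym_id[of r] by (simp add: inv_number_def window_def id_def)
next
  case (snoc i ws)
  let ?w = "foldr (\<circ>) (map (sgen r) ws) id"
  have "set ws \<subseteq> {1..r}" using snoc.prems by simp
  then have w: "?w \<in> aff_sym r" "inv_number r ?w \<le> length ws" using snoc.IH by blast+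
  have e: "foldr (\<circ>) (map (sgen r) (ws @ [i])) id = ?w \<circ> simple_refl r (int i)"
    using foldr_comp_eq_comp[of "map (sgen r) ws" "sgen r i"] by (simp add: sgen_eq_simple_refl)
  show ?case unfolding e
  proof
    show "?w \<circ> simple_refl r (int i) \<in> aff_sym r"
      by (rule aff_sym_comp[OF w(1) simple_refl_aff_sym[OF r]])
    have "length (ws @ [i]) = length ws + 1" by simp
    then show "inv_number r (?w \<circ> simple_refl r (int i)) \<le> length (ws @ [i])"
      using inv_number_comp_simple_refl_le[OF r w(1), of "int i"] w(2) by linarith
  qed
qed

lemma descent_factorization:
  assumes r: "r \<ge> 1" and w: "w \<in> aff_sym r" and j: "w (j + 1) < w j"
  shows "\<exists>w' i. w' \<in> aff_sym r \<and> i \<in> {1..r} \<and> w = w' \<circ> sgen r i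
           \<and> inv_number r w = inv_number r w' + 1"
proof -
  have "w (j + 1) = w j + 1" if "r = 1" using aff_sym_shift[OF w, of j 1] that by simp
  then have r2: "r \<ge> 2" using r j by fastforce
  let ?s = "simple_refl r j"
  define w' where "w' = w \<circ> ?s"
  have w': "w' \<in> aff_sym r" unfolding w'_def by (rule aff_sym_comp[OF w simple_refl_aff_sym[OF r]])
  have "w' j < w' (j + 1)" using j simple_refl_c simple_refl_c_succ[OF r2] by (simp add: w'_def)
  then have "inv_number r (w' \<circ> ?s) = inv_number r w' + 1"
    by (rule inv_number_comp_simple_refl[OF r2 w'])
  moreover have w'_s: "w' \<circ> ?s = w"
    unfolding w'_def comp_assoc simple_refl_comp_simple_refl[OF r2] comp_id ..
  ultimately have "inv_number r w = inv_number r w' + 1" by simp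
  define i where "i = nat ((j - 1) mod int r) + 1"
  have i: "i \<in> {1..r}" "int i = (j - 1) mod int r + 1"
    using mod_plus_one_bounds[OF r, of j] by (auto simp: i_def)
  then have "sgen r i = ?s"
    unfolding sgen_eq_simple_refl by (intro simple_refl_mod_eq) (simp add: mod_add_left_eq)
  then have "w = w' \<circ> sgen r i" using w'_s by simp
  then show ?thesis using w' i(1) \<open>inv_number r w = _\<close> by blast
qed

lemma reduced_word_exists:
  assumes r: "r \<ge> 1" and w: "w \<in> aff_sym r"
  shows "\<exists>a ws. length ws = inv_number r w \<and> set ws \<subseteq> {1..r}
            \<and> w = rho_pow a \<circ> foldr (\<circ>) (map (sgen r) ws) id"
  using w
proof (induction "inv_number r w" arbitrary: w rule: less_induct)
  case less
  show ?case
  proof (cases "\<exists>j. w (j + 1) < w j")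
    case False
    have asc: "w j < w (j + 1)" for j
    proof -
      have "w j \<noteq> w (j + 1)" using aff_sym_eq_iff[OF less.prems, of j "j + 1"] by simp
      then show ?thesis using False by (meson linorder_neqE)
    qed
    then have "length [] = inv_number r w"
      by (simp add: inv_number_def inversions_ascending window_def)
    moreover have "w = rho_pow (w 0) \<circ> foldr (\<circ>) (map (sgen r) []) id"
      by (simp, rule translation_if_ascending[OF less.prems asc])
    moreover have "set [] \<subseteq> {1..r}" by simp
    ultimately show ?thesis by blast
  next
    case True
    then obtain w' i where w': "w' \<in> aff_sym r" and i: "i \<in> {1..r}" and w_eq: "w = w' \<circ> sgen r i"
      and inv_w: "inv_number r w = inv_number r w' + 1"
      using descent_factorization[OF r less.prems] by blast
    then obtain a ws where ws: "length ws = inv_number r w'" "set ws \<subseteq> {1..r}"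
      and w'_eq: "w' = rho_pow a \<circ> foldr (\<circ>) (map (sgen r) ws) id"
      using less.hyps by fastforce
    have "w = rho_pow a \<circ> foldr (\<circ>) (map (sgen r) (ws @ [i])) id"
      unfolding w_eq w'_eq using foldr_comp_eq_comp[of "map (sgen r) ws" "sgen r i"] by (simp add: comp_assoc)
    moreover have "length (ws @ [i]) = inv_number r w" "set (ws @ [i]) \<subseteq> {1..r}"
      using ws inv_w i by auto
    ultimately show ?thesis by blast
  qed
qed

lemma len_eq_inv_number:
  assumes r: "r \<ge> 1" and w: "w \<in> aff_sym r"
  shows "len r w = inv_number r w"
proof -
  let ?P = "\<lambda>k. \<exists>a ws. length ws = k \<and> set ws \<subseteq> {1..r}
                      \<and> w = rho_pow a \<circ> foldr (\<circ>) (map (sgen r) ws) id"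
  have P: "?P (inv_number r w)" using reduced_word_exists[OF r w] by blast
  then have le: "len r w \<le> inv_number r w" unfolding len_def by (rule Least_le)
  have "?P (len r w)" unfolding len_def using P by (rule LeastI)
  then obtain a ws where ws: "length ws = len r w" "set ws \<subseteq> {1..r}"
    and w_eq: "w = rho_pow a \<circ> foldr (\<circ>) (map (sgen r) ws) id" by blast
  have "inv_number r w = inv_number r (foldr (\<circ>) (map (sgen r) ws) id)"
    unfolding w_eq by (rule inv_number_rho_pow)
  then show ?thesis using word_aff_sym_inv_number_le[OF r ws(2)] ws(1) le by linarith
qed

lemma Young_aff_sym: "w \<in> Young n r nu \<Longrightarrow> w \<in> aff_sym r"
  by (simp add: Young_def)

lemma Young_comp:
  assumes "w \<in> Young n r nu" and "u \<in> Young n r nu"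
  shows "w \<circ> u \<in> Young n r nu"
proof -
  have "(w \<circ> u) ` Rset n r nu m = w ` u ` Rset n r nu m" for m by (simp only: image_comp)
  then show ?thesis using assms by (simp add: Young_def aff_sym_comp)
qed

lemma Young_id: "id \<in> Young n r nu"
  by (simp add: Young_def aff_sym_id)

lemma Young_eq_dcoset_id: "Young n r mu = dcoset n r mu id mu"
proof
  show "Young n r mu \<subseteq> dcoset n r mu id mu"
  proof
    fix w assume "w \<in> Young n r mu"
    moreover have "w = w \<circ> id \<circ> id" by simp
    ultimately show "w \<in> dcoset n r mu id mu" using Young_id unfolding dcoset_def by blast
  qed
  show "dcoset n r mu id mu \<subseteq> Young n r mu"
    unfolding dcoset_def using Young_comp by auto
qed

context periodic_composition
begin

lemma block_Young: "w \<in> Young n r nu \<Longrightarrow> block (w a) = block a"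
  using mem_Rset_iff_block[of a "block a"] mem_Rset_iff_block[of "w a" "block a"]
  by (auto simp: Young_def)

lemma block_simple_refl:
  assumes c: "block c = block (c + 1)"
  shows "block (simple_refl r c x) = block x"
proof -
  have r2: "r \<ge> 2" by (rule r_ge_2_if_block_eq_succ[OF c])
  have class_block: "block (p + e) = block (c + e) + k * int n" if "p = c + k * int r" for p e k
    using block_shift[of "c + e" k] that by (simp add: algebra_simps)
  show ?thesis
  proof (cases "int r dvd (x - c)")
    case True
    then obtain k where "x = c + k * int r" by (auto simp: dvd_def algebra_simps)
    then show ?thesis
      using class_block[where p=x and e=0 and k=k] class_block[where p=x and e=1 and k=k] c simple_refl_up[OF True] by simp
  next
    case False
    show ?thesis
    proof (cases "int r dvd (x - c - 1)")
      case True
      then obtain k where k: "x - 1 = c + k * int r" by (auto simp: dvd_def algebra_simps)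
      have "block (x - 1) = block c + k * int n"
        using class_block[where p="x - 1" and e=0 and k=k] k by simp
      moreover have "block (x - 1 + 1) = block (c + 1) + k * int n" by (rule class_block[OF k])
      ultimately show ?thesis using c simple_refl_down[OF r2 True] by simp
    next
      case False
      then show ?thesis using \<open>\<not> int r dvd (x - c)\<close> by (simp add: simple_refl_dvd)
    qed
  qed
qed

lemma simple_refl_Young:
  assumes c: "block c = block (c + 1)"
  shows "simple_refl r c \<in> Young n r nu"
proof -
  have r2: "r \<ge> 2" by (rule r_ge_2_if_block_eq_succ[OF c])
  let ?s = "simple_refl r c"
  have sub: "?s ` Rset n r nu m \<subseteq> Rset n r nu m" for m
    using block_simple_refl[OF c] by (auto simp: mem_Rset_iff_block)
  have "?s ` Rset n r nu m = Rset n r nu m" for m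
  proof
    show "Rset n r nu m \<subseteq> ?s ` Rset n r nu m"
    proof
      fix x assume "x \<in> Rset n r nu m"
      then show "x \<in> ?s ` Rset n r nu m"
        using sub simple_refl_simple_refl[OF r2, of c x] by (intro rev_image_eqI[of "?s x"]) auto
    qed
  qed (rule sub)
  then show ?thesis using simple_refl_aff_sym[OF r_pos] by (simp add: Young_def)
qed

lemma descending_within_block:
  fixes f :: "int \<Rightarrow> int"
  assumes desc: "\<And>j. block j = block (j + 1) \<Longrightarrow> f (j + 1) < f j"
    and "p < q" and "block p = block q"
  shows "f q < f p"
proof -
  have "- f p < - f q"
  proof (rule strict_mono_int_chain[OF _ \<open>p < q\<close>])
    fix j assume j: "p \<le> j" "j < q"
    have "block j = block p" "block (j + 1) = block p"
      using block_eq_between[OF \<open>block p = block q\<close>, of j]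
        block_eq_between[OF \<open>block p = block q\<close>, of "j + 1"] j by simp_all
    then show "- f j < - f (j + 1)" using desc[of j] by simp
  qed
  then show ?thesis by simp
qed

definition same_block_pairs :: "(int \<times> int) set" where
  "same_block_pairs = {x. fst x < snd x \<and> block (fst x) = block (snd x)}"

lemma finite_window_same_block_pairs: "finite (window r same_block_pairs)"
proof -
  have "window r same_block_pairs \<subseteq> {1..int r} \<times> {1..2 * int r}"
  proof
    fix x assume "x \<in> window r same_block_pairs"
    then have "fst x < snd x" "snd x < fst x + int r" "fst x \<in> {1..int r}"
      using less_add_r_if_block_le[of "snd x" "fst x"] by (auto simp: window_def same_block_pairs_def)
    then show "x \<in> {1..int r} \<times> {1..2 * int r}" by (cases x) auto
  qed
  then show ?thesis by (rule finite_subset) simp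
qed

end

section \<open>Longest elements of double cosets\<close>

lemma inv_number_simple_refl_comp:
  assumes r: "r \<ge> 2" and z: "z \<in> aff_sym r" and asc: "inv z c < inv z (c + 1)"
  shows "inv_number r (simple_refl r c \<circ> z) = inv_number r z + 1"
proof -
  let ?s = "simple_refl r c"
  have r1: "r \<ge> 1" using r by simp
  have s: "?s \<in> aff_sym r" by (rule simple_refl_aff_sym[OF r1])
  have inv_s: "inv ?s = ?s"
    by (rule inv_unique_comp) (rule simple_refl_comp_simple_refl[OF r])+
  have inv_comp: "inv (?s \<circ> z) = inv z \<circ> ?s"
    using o_inv_distrib[OF aff_sym_bij[OF s] aff_sym_bij[OF z]] unfolding inv_s .
  have "inv_number r (?s \<circ> z) = inv_number r (inv (?s \<circ> z))"
    by (rule inv_number_inv[OF aff_sym_comp[OF s z] r1, symmetric])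
  also have "\<dots> = inv_number r (inv z \<circ> ?s)" unfolding inv_comp ..
  also have "\<dots> = inv_number r (inv z) + 1"
    by (rule inv_number_comp_simple_refl[OF r aff_sym_inv[OF z] asc])
  also have "\<dots> = inv_number r z + 1" using inv_number_inv[OF z r1] by simp
  finally show ?thesis .
qed

locale composition_pair =
  fixes n r :: nat and lam mu :: "int \<Rightarrow> nat"
  assumes n_pos: "n \<ge> 1" and r_pos: "r \<ge> 1"
    and lam_Lambda: "lam \<in> Lambda n r" and mu_Lambda: "mu \<in> Lambda n r"
begin

sublocale L: periodic_composition n r lam
  using n_pos r_pos lam_Lambda by unfold_locales
sublocale M: periodic_composition n r mu
  using n_pos r_pos mu_Lambda by unfold_locales

abbreviation "row_block \<equiv> L.block"
abbreviation "col_block \<equiv> M.block"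

text \<open>The candidates for inversions of \<open>z\<close> between two distinct \<open>\<mu>\<close>-blocks.\<close>
definition crossing_pairs :: "(int \<Rightarrow> int) \<Rightarrow> (int \<times> int) set" where
  "crossing_pairs z = {x. col_block (fst x) < col_block (snd x) \<and> row_block (z (snd x)) \<le> row_block (z (fst x))}"

lemma inversions_subset_pairs: "inversions z \<subseteq> M.same_block_pairs \<union> crossing_pairs z"
proof
  fix x assume "x \<in> inversions z"
  then have "fst x < snd x" "z (snd x) < z (fst x)" by (auto simp: inversions_def)
  then have "col_block (fst x) \<le> col_block (snd x)" "row_block (z (snd x)) \<le> row_block (z (fst x))"
    using M.block_mono L.block_mono by simp_all
  then show "x \<in> M.same_block_pairs \<union> crossing_pairs z"
    using \<open>fst x < snd x\<close> by (auto simp: M.same_block_pairs_def crossing_pairs_def)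
qed

lemma pairs_subset_inversions:
  assumes z: "z \<in> aff_sym r"
    and desc_mu: "\<And>j. col_block j = col_block (j + 1) \<Longrightarrow> z (j + 1) < z j"
    and desc_lam: "\<And>v. row_block v = row_block (v + 1) \<Longrightarrow> inv z (v + 1) < inv z v"
  shows "M.same_block_pairs \<union> crossing_pairs z \<subseteq> inversions z"
proof
  fix x assume x: "x \<in> M.same_block_pairs \<union> crossing_pairs z"
  obtain p q where pq: "x = (p, q)" by force
  show "x \<in> inversions z"
  proof (cases "x \<in> M.same_block_pairs")
    case True
    then have "p < q" "col_block p = col_block q" by (simp_all add: M.same_block_pairs_def pq)
    then show ?thesis using M.descending_within_block[where f=z, OF desc_mu] by (simp add: inversions_def pq)
  next
    case False
    then have h: "col_block p < col_block q" "row_block (z q) \<le> row_block (z p)"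
      using x by (simp_all add: crossing_pairs_def pq)
    have "p < q" using M.less_if_block_less h(1) by simp
    have "z q < z p"
    proof (cases "row_block (z q) < row_block (z p)")
      case True
      then show ?thesis using L.less_if_block_less by simp
    next
      case False
      show ?thesis
      proof (rule ccontr)
        assume "\<not> z q < z p"
        moreover have "z q \<noteq> z p" using aff_sym_eq_iff[OF z] \<open>p < q\<close> by simp
        ultimately have "z p < z q" by simp
        moreover have "row_block (z p) = row_block (z q)" using False h by simp
        ultimately have "inv z (z q) < inv z (z p)" using L.descending_within_block[where f="inv z", OF desc_lam] by blast
        then show False using \<open>p < q\<close> by (simp add: aff_sym_inv_f[OF z])
      qed
    qed
    then show ?thesis using \<open>p < q\<close> by (simp add: inversions_def pq)
  qed
qed

lemma finite_window_crossing_pairs: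
  assumes z: "z \<in> aff_sym r"
  shows "finite (window r (crossing_pairs z))"
proof -
  obtain M where M: "\<And>x. \<bar>z x - x\<bar> \<le> M" using aff_sym_bounded_displacement[OF z r_pos] by blast
  have "window r (crossing_pairs z) \<subseteq> {1..int r} \<times> {1..2 * int r + 2 * M}"
  proof
    fix x assume "x \<in> window r (crossing_pairs z)"
    then have h: "col_block (fst x) < col_block (snd x)" "row_block (z (snd x)) \<le> row_block (z (fst x))"
      "fst x \<in> {1..int r}"
      by (auto simp: window_def crossing_pairs_def)
    have "fst x < snd x" using M.less_if_block_less h(1) by simp
    moreover have "z (snd x) < z (fst x) + int r" using L.less_add_r_if_block_le h(2) by simp
    ultimately show "x \<in> {1..int r} \<times> {1..2 * int r + 2 * M}"
      using h(3) M[of "fst x"] M[of "snd x"] by (cases x) auto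
  qed
  then show ?thesis by (rule finite_subset) simp
qed

lemma card_window_pairs:
  assumes z: "z \<in> aff_sym r"
  shows "card (window r (M.same_block_pairs \<union> crossing_pairs z))
           = card (window r M.same_block_pairs) + card (window r (crossing_pairs z))"
proof -
  have "window r (M.same_block_pairs \<union> crossing_pairs z)
          = window r M.same_block_pairs \<union> window r (crossing_pairs z)"
    by (auto simp: window_def)
  moreover have "window r M.same_block_pairs \<inter> window r (crossing_pairs z) = {}"
    by (auto simp: window_def M.same_block_pairs_def crossing_pairs_def)
  ultimately show ?thesis
    using M.finite_window_same_block_pairs finite_window_crossing_pairs[OF z] by (simp add: card_Un_disjoint)
qed

lemma crossing_pairs_shift_pair:
  assumes z: "z \<in> aff_sym r" and x: "x \<in> crossing_pairs z"
  shows "shift_pair r t x \<in> crossing_pairs z"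
  using x aff_sym_shift[OF z, of "fst x" t] aff_sym_shift[OF z, of "snd x" t]
  by (simp add: crossing_pairs_def shift_pair_def M.block_shift L.block_shift)

text \<open>The crossing pairs of \<open>w y u\<close> are those of \<open>y\<close> moved by \<open>u\<^sup>-\<^sup>1\<close>, because
  \<open>w\<close> and \<open>u\<close> preserve row and column blocks respectively.\<close>
lemma card_window_crossing_pairs_dcoset:
  assumes y: "y \<in> aff_sym r" and w: "w \<in> Young n r lam" and u: "u \<in> Young n r mu"
  shows "card (window r (crossing_pairs (w \<circ> y \<circ> u))) = card (window r (crossing_pairs y))"
proof -
  let ?z = "w \<circ> y \<circ> u"
  have ua: "u \<in> aff_sym r" by (rule Young_aff_sym[OF u])
  have za: "?z \<in> aff_sym r" by (rule aff_sym_comp[OF aff_sym_comp[OF Young_aff_sym[OF w] y] ua])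
  let ?psi = "\<lambda>x. (u (fst x), u (snd x))"
  have cross: "x \<in> crossing_pairs ?z \<longleftrightarrow> ?psi x \<in> crossing_pairs y" for x
    by (simp add: crossing_pairs_def M.block_Young[OF u] L.block_Young[OF w])
  have img: "window r (crossing_pairs y) = ?psi ` {x\<in>crossing_pairs ?z. u (fst x) \<in> {1..int r}}"
  proof (rule set_eqI, rule iffI)
    fix x assume x: "x \<in> window r (crossing_pairs y)"
    let ?v = "(inv u (fst x), inv u (snd x))"
    have "?v \<in> {x\<in>crossing_pairs ?z. u (fst x) \<in> {1..int r}}"
      using x cross[of ?v] by (simp add: window_def aff_sym_f_inv[OF ua])
    moreover have "?psi ?v = x" by (simp add: aff_sym_f_inv[OF ua])
    ultimately show "x \<in> ?psi ` {x\<in>crossing_pairs ?z. u (fst x) \<in> {1..int r}}" by (rule rev_image_eqI[OF _ sym])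
  next
    fix x assume "x \<in> ?psi ` {x\<in>crossing_pairs ?z. u (fst x) \<in> {1..int r}}"
    then show "x \<in> window r (crossing_pairs y)" using cross by (auto simp: window_def)
  qed
  have "inj ?psi" by (rule injI) (simp add: aff_sym_eq_iff[OF ua] prod_eq_iff)
  have "card (window r (crossing_pairs ?z)) = card {x\<in>crossing_pairs ?z. u (fst x) \<in> {1..int r}}"
    unfolding window_def
    by (rule card_fundamental_domains_eq(1)[OF r_pos], erule crossing_pairs_shift_pair[OF za])
      (simp_all add: shift_pair_def aff_sym_shift[OF ua])
  also have "\<dots> = card (window r (crossing_pairs y))"
    unfolding img using \<open>inj ?psi\<close> by (simp add: card_image inj_on_subset[of ?psi UNIV])
  finally show ?thesis .
qed

text \<open>Otherwise multiplying by the offending simple reflection, which lies in \<open>\<SS>\<^sub>\<mu>\<close> resp.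
  \<open>\<SS>\<^sub>\<lambda>\<close>, would give a longer element of the same double coset.\<close>
lemma longest_in_dcoset_descending:
  assumes y: "y \<in> aff_sym r" and z: "longest_in r (dcoset n r lam y mu) z"
  shows "col_block j = col_block (j + 1) \<Longrightarrow> z (j + 1) < z j"
    and "row_block v = row_block (v + 1) \<Longrightarrow> inv z (v + 1) < inv z v"
proof -
  obtain w u where w: "w \<in> Young n r lam" and u: "u \<in> Young n r mu" and z_eq: "z = w \<circ> y \<circ> u"
    using z by (auto simp: longest_in_def dcoset_def)
  have za: "z \<in> aff_sym r"
    unfolding z_eq by (rule aff_sym_comp[OF aff_sym_comp[OF Young_aff_sym[OF w] y] Young_aff_sym[OF u]])
  have longest: "len r z' \<le> len r z" if "z' \<in> dcoset n r lam y mu" for z'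
    using z that by (simp add: longest_in_def)
  show "z (j + 1) < z j" if j: "col_block j = col_block (j + 1)"
  proof (rule ccontr)
    assume "\<not> z (j + 1) < z j"
    moreover have "z j \<noteq> z (j + 1)" using aff_sym_eq_iff[OF za, of j "j + 1"] by simp
    ultimately have asc: "z j < z (j + 1)" by simp
    have r2: "r \<ge> 2" by (rule M.r_ge_2_if_block_eq_succ[OF j])
    have "z \<circ> simple_refl r j = w \<circ> y \<circ> (u \<circ> simple_refl r j)" by (simp add: z_eq comp_assoc)
    then have "z \<circ> simple_refl r j \<in> dcoset n r lam y mu"
      using w Young_comp[OF u M.simple_refl_Young[OF j]] by (auto simp: dcoset_def)
    moreover have "len r (z \<circ> simple_refl r j) = len r z + 1"
      using len_eq_inv_number[OF r_pos aff_sym_comp[OF za simple_refl_aff_sym[OF r_pos]]]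
        len_eq_inv_number[OF r_pos za] inv_number_comp_simple_refl[OF r2 za asc] by simp
    ultimately show False using longest by fastforce
  qed
  show "inv z (v + 1) < inv z v" if v: "row_block v = row_block (v + 1)"
  proof (rule ccontr)
    assume "\<not> inv z (v + 1) < inv z v"
    moreover have "inv z v \<noteq> inv z (v + 1)" using aff_sym_eq_iff[OF aff_sym_inv[OF za], of v "v + 1"] by simp
    ultimately have asc: "inv z v < inv z (v + 1)" by simp
    have r2: "r \<ge> 2" by (rule L.r_ge_2_if_block_eq_succ[OF v])
    have "simple_refl r v \<circ> z = (simple_refl r v \<circ> w) \<circ> y \<circ> u" by (simp add: z_eq comp_assoc)
    then have "simple_refl r v \<circ> z \<in> dcoset n r lam y mu"
      using u Young_comp[OF L.simple_refl_Young[OF v] w] by (auto simp: dcoset_def)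
    moreover have "len r (simple_refl r v \<circ> z) = len r z + 1"
      using len_eq_inv_number[OF r_pos aff_sym_comp[OF simple_refl_aff_sym[OF r_pos] za]]
        len_eq_inv_number[OF r_pos za] inv_number_simple_refl_comp[OF r2 za asc] by simp
    ultimately show False using longest by fastforce
  qed
qed

theorem len_longest_in_dcoset:
  assumes y: "y \<in> aff_sym r" and z: "longest_in r (dcoset n r lam y mu) z"
  shows "len r z = card (window r M.same_block_pairs) + card (window r (crossing_pairs y))"
proof -
  obtain w u where w: "w \<in> Young n r lam" and u: "u \<in> Young n r mu" and z_eq: "z = w \<circ> y \<circ> u"
    using z by (auto simp: longest_in_def dcoset_def)
  have za: "z \<in> aff_sym r"
    unfolding z_eq by (rule aff_sym_comp[OF aff_sym_comp[OF Young_aff_sym[OF w] y] Young_aff_sym[OF u]])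
  have "inversions z = M.same_block_pairs \<union> crossing_pairs z"
    using inversions_subset_pairs pairs_subset_inversions[OF za]
      longest_in_dcoset_descending[OF y z] by blast
  then have "len r z = card (window r (M.same_block_pairs \<union> crossing_pairs z))"
    using len_eq_inv_number[OF r_pos za] by (simp add: inv_number_def)
  also have "\<dots> = card (window r M.same_block_pairs) + card (window r (crossing_pairs y))"
    using card_window_pairs[OF za] card_window_crossing_pairs_dcoset[OF y w u] z_eq by simp
  finally show ?thesis .
qed

section \<open>The matrix of a double coset\<close>

text \<open>\<open>cell y i j\<close> is \<open>R\<^sup>\<lambda>\<^sub>i \<inter> y R\<^sup>\<mu>\<^sub>j\<close>, described through the blocks.\<close>
definition cell :: "(int \<Rightarrow> int) \<Rightarrow> int \<Rightarrow> int \<Rightarrow> int set" where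
  "cell y i j = {a. row_block a = i \<and> col_block (inv y a) = j}"

lemma jmath_eq_card_cell:
  assumes y: "y \<in> aff_sym r"
  shows "jmath n r lam y mu i j = card (cell y i j)"
proof -
  have "a \<in> y ` Rset n r mu j \<longleftrightarrow> inv y a \<in> Rset n r mu j" for a
    using aff_sym_inv_f[OF y] aff_sym_f_inv[OF y] by (metis image_iff)
  then have "Rset n r lam i \<inter> y ` Rset n r mu j = cell y i j"
    by (auto simp: cell_def L.mem_Rset_iff_block M.mem_Rset_iff_block)
  then show ?thesis by (simp add: jmath_def)
qed

lemma finite_cell: "finite (cell y i j)"
  by (rule finite_subset[OF _ L.finite_Rset[of i]]) (auto simp: cell_def L.mem_Rset_iff_block)

lemma co_jmath:
  assumes y: "y \<in> aff_sym r"
  shows "co (jmath n r lam y mu) = mu"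
proof
  fix j
  let ?A = "jmath n r lam y mu" and ?X = "y ` Rset n r mu j"
  have finX: "finite ?X" using M.finite_Rset by simp
  have entry: "?A i j = card {a \<in> ?X. row_block a = i}" for i
  proof -
    have "Rset n r lam i \<inter> ?X = {a \<in> ?X. row_block a = i}" by (auto simp: L.mem_Rset_iff_block)
    then show ?thesis by (simp add: jmath_def)
  qed
  have support: "{i. ?A i j \<noteq> 0} = row_block ` ?X"
    using finX by (auto simp: entry)
  have "inj_on y (Rset n r mu j)" using aff_sym_eq_iff[OF y] by (simp add: inj_on_def)
  then have "card ?X = mu j" by (simp add: card_image M.card_Rset)
  moreover have "card ?X = (\<Sum>i\<in>row_block ` ?X. card {a \<in> ?X. row_block a = i})"
    using sum.image_gen[OF finX, of "\<lambda>_. 1::nat" row_block] by simp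
  ultimately show "co ?A j = mu j" unfolding co_def support by (simp add: entry)
qed

text \<open>The image of \<open>crossing_pairs y\<close> under \<open>y \<times> y\<close>, with the window taken on the image side.\<close>
definition cell_pairs :: "(int \<Rightarrow> int) \<Rightarrow> (int \<times> int) set" where
  "cell_pairs y = {x. fst x \<in> {1..int r} \<and> col_block (inv y (fst x)) < col_block (inv y (snd x))
                      \<and> row_block (snd x) \<le> row_block (fst x)}"

definition cell_index :: "(int \<Rightarrow> int) \<Rightarrow> int \<times> int \<Rightarrow> int \<times> int \<times> int \<times> int" where
  "cell_index y x = (row_block (fst x), col_block (inv y (fst x)), row_block (snd x), col_block (inv y (snd x)))"

lemma card_window_crossing_pairs_eq:
  assumes y: "y \<in> aff_sym r"
  shows "card (window r (crossing_pairs y)) = card (cell_pairs y)" and "finite (cell_pairs y)"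
proof -
  let ?S = "{x\<in>crossing_pairs y. y (fst x) \<in> {1..int r}}"
  let ?yy = "\<lambda>x. (y (fst x), y (snd x))"
  have normalize: "card (window r (crossing_pairs y)) = card ?S"
    "finite (window r (crossing_pairs y)) \<longleftrightarrow> finite ?S"
    unfolding window_def
    by (rule card_fundamental_domains_eq[OF r_pos], erule crossing_pairs_shift_pair[OF y],
        simp add: shift_pair_def, simp add: shift_pair_def aff_sym_shift[OF y])+
  have "inj ?yy" by (rule injI) (simp add: aff_sym_eq_iff[OF y] prod_eq_iff)
  moreover have "cell_pairs y = ?yy ` ?S"
  proof (rule set_eqI, rule iffI)
    fix x assume "x \<in> cell_pairs y"
    then have "(inv y (fst x), inv y (snd x)) \<in> ?S"
      by (simp add: cell_pairs_def crossing_pairs_def aff_sym_f_inv[OF y])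
    moreover have "?yy (inv y (fst x), inv y (snd x)) = x" by (simp add: aff_sym_f_inv[OF y])
    ultimately show "x \<in> ?yy ` ?S" by (rule rev_image_eqI[OF _ sym])
  next
    fix x assume "x \<in> ?yy ` ?S"
    then show "x \<in> cell_pairs y" by (auto simp: cell_pairs_def crossing_pairs_def aff_sym_inv_f[OF y])
  qed
  ultimately have "card (cell_pairs y) = card ?S" "finite (cell_pairs y) \<longleftrightarrow> finite ?S"
    by (simp_all add: card_image inj_on_subset[of ?yy UNIV] finite_image_iff)
  then show "card (window r (crossing_pairs y)) = card (cell_pairs y)" "finite (cell_pairs y)"
    using normalize finite_window_crossing_pairs[OF y] by simp_all
qed

lemma cell_pairs_fiber:
  assumes "1 \<le> i" "i \<le> int n" "k \<le> i" "j < l"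
  shows "{x \<in> cell_pairs y. cell_index y x = (i, j, k, l)} = cell y i j \<times> cell y k l"
proof (rule set_eqI, rule iffI)
  fix x assume "x \<in> {x \<in> cell_pairs y. cell_index y x = (i, j, k, l)}"
  then show "x \<in> cell y i j \<times> cell y k l" by (simp add: cell_index_def cell_def mem_Times_iff)
next
  fix x assume "x \<in> cell y i j \<times> cell y k l"
  then have idx: "cell_index y x = (i, j, k, l)" by (simp add: cell_index_def cell_def mem_Times_iff)
  then have "1 \<le> fst x \<and> fst x \<le> int r"
    using L.block_window_iff[of "fst x"] assms by (simp add: cell_index_def)
  then show "x \<in> {x \<in> cell_pairs y. cell_index y x = (i, j, k, l)}"
    using idx assms by (simp add: cell_pairs_def cell_index_def)
qed

lemma cell_index_image:
  assumes y: "y \<in> aff_sym r"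
  defines "A \<equiv> jmath n r lam y mu"
  shows "cell_index y ` cell_pairs y
           = {(i, j, k, l). 1 \<le> i \<and> i \<le> int n \<and> k \<le> i \<and> j < l \<and> A i j \<noteq> 0 \<and> A k l \<noteq> 0}"
proof (rule set_eqI, rule iffI)
  have nonzero: "A i j \<noteq> 0 \<longleftrightarrow> cell y i j \<noteq> {}" for i j
    using jmath_eq_card_cell[OF y] finite_cell by (simp add: A_def)
  fix t
  show "t \<in> cell_index y ` cell_pairs y"
    if t: "t \<in> {(i, j, k, l). 1 \<le> i \<and> i \<le> int n \<and> k \<le> i \<and> j < l \<and> A i j \<noteq> 0 \<and> A k l \<noteq> 0}"
  proof -
    obtain i j k l where t_eq: "t = (i, j, k, l)" by (cases t)
    then have ijkl: "1 \<le> i" "i \<le> int n" "k \<le> i" "j < l" "A i j \<noteq> 0" "A k l \<noteq> 0" using t by simp_all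
    then obtain a b where "a \<in> cell y i j" "b \<in> cell y k l" using nonzero by blast
    then have "(a, b) \<in> {x \<in> cell_pairs y. cell_index y x = t}"
      using cell_pairs_fiber[OF ijkl(1-4)] t_eq by blast
    then show ?thesis by (auto intro: image_eqI[OF sym])
  qed
  show "t \<in> {(i, j, k, l). 1 \<le> i \<and> i \<le> int n \<and> k \<le> i \<and> j < l \<and> A i j \<noteq> 0 \<and> A k l \<noteq> 0}"
    if "t \<in> cell_index y ` cell_pairs y"
  proof -
    from that obtain x where x: "x \<in> cell_pairs y" "t = cell_index y x" by blast
    then have "1 \<le> row_block (fst x) \<and> row_block (fst x) \<le> int n"
      using L.block_window_iff by (simp add: cell_pairs_def)
    moreover have "A (row_block (fst x)) (col_block (inv y (fst x))) \<noteq> 0"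
      "A (row_block (snd x)) (col_block (inv y (snd x))) \<noteq> 0"
      unfolding nonzero cell_def by auto
    ultimately show ?thesis using x by (auto simp: cell_pairs_def cell_index_def)
  qed
qed

text \<open>Sorting the cell pairs by the cells of their two entries.\<close>
lemma card_window_crossing_pairs_eq_dA:
  assumes y: "y \<in> aff_sym r"
  shows "card (window r (crossing_pairs y)) = dA n (jmath n r lam y mu)"
proof -
  let ?A = "jmath n r lam y mu"
  have "card (window r (crossing_pairs y)) = card (cell_pairs y)"
    by (rule card_window_crossing_pairs_eq(1)[OF y])
  also have "\<dots> = (\<Sum>t\<in>cell_index y ` cell_pairs y. card {x \<in> cell_pairs y. cell_index y x = t})"
    using sum.image_gen[OF card_window_crossing_pairs_eq(2)[OF y], of "\<lambda>_. 1::nat" "cell_index y"] by simp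
  also have "\<dots> = (\<Sum>(i, j, k, l)\<in>cell_index y ` cell_pairs y. ?A i j * ?A k l)"
  proof (rule sum.cong[OF refl])
    fix t assume "t \<in> cell_index y ` cell_pairs y"
    moreover obtain i j k l where t: "t = (i, j, k, l)" by (cases t)
    ultimately have "1 \<le> i" "i \<le> int n" "k \<le> i" "j < l" by (simp_all add: cell_index_image[OF y])
    then show "card {x \<in> cell_pairs y. cell_index y x = t} = (case t of (i, j, k, l) \<Rightarrow> ?A i j * ?A k l)"
      unfolding t cell_pairs_fiber[OF \<open>1 \<le> i\<close> \<open>i \<le> int n\<close> \<open>k \<le> i\<close> \<open>j < l\<close>]
      by (simp add: card_cartesian_product jmath_eq_card_cell[OF y])
  qed
  also have "\<dots> = dA n ?A" by (simp add: dA_def cell_index_image[OF y])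
  finally show ?thesis .
qed

end

theorem lemma7p1:
  fixes n r :: nat and A :: amat and lam mu :: "int \<Rightarrow> nat" and y yplus w0 :: "int \<Rightarrow> int"
  assumes "n \<ge> 2" and "r \<ge> 1"
    and "A \<in> Theta_r n r"
    and "lam \<in> Lambda n r" and "mu \<in> Lambda n r"
    and "y \<in> Dpair n r lam mu"
    and "A = jmath n r lam y mu"
    and "longest_in r (dcoset n r lam y mu) yplus"
    and "longest_in r (Young n r mu) w0"
  shows "mu = co A \<and> len r yplus = dA n A + len r w0"
proof -
  interpret composition_pair n r lam mu using assms by unfold_locales auto
  interpret Mu: composition_pair n r mu mu using assms by unfold_locales auto
  have y: "y \<in> aff_sym r" using assms(6) by (simp add: Dpair_def Dmin_def)
  have "Mu.crossing_pairs id = {}" by (auto simp: Mu.crossing_pairs_def)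
  moreover have "longest_in r (dcoset n r mu id mu) w0"
    using assms(9) by (simp only: Young_eq_dcoset_id)
  ultimately have "len r w0 = card (window r M.same_block_pairs)"
    using Mu.len_longest_in_dcoset[OF aff_sym_id] by (simp add: window_def)
  moreover have "len r yplus = card (window r M.same_block_pairs) + dA n A"
    using len_longest_in_dcoset[OF y assms(8)] card_window_crossing_pairs_eq_dA[OF y] assms(7) by simp
  moreover have "mu = co A" using co_jmath[OF y] assms(7) by simp
  ultimately show ?thesis by simp
qed

end
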